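(* For every $M\geq 1$, $g(M)-h(M)$ equals the number of partitions in $\mathcal G_1(M)$ that have no part equal to $1$.
   Context: The perimeter of a nonempty partition $\lambda$ with largest part $\lambda_1$ and $\ell(\lambda)$ parts is $\lambda_1+\ell(\lambda)-1$. $\mathcal G(M)$ is the set of partitions into odd parts with perimeter $M$, $\mathcal H(M)$ the set of partitions into distinct parts with perimeter $M$; $g(M)$ (resp. $h(M)$) is the total number of parts, summed over all partitions in $\mathcal G(M)$ (resp. $\mathcal H(M)$). $\mathcal G_1(M)$ is the set of partitions with perimeter $M$ in which exactly one distinct even integer occurs as a part (possibly with multiplicity greater than one) and all other parts are odd. *)

theory Defs
  imports Main "HOL-Library.Multiset"
begin

definition is_partition :: "nat multiset \<Rightarrow> bool" where
  "is_partition p \<longleftrightarrow> (\<forall>x \<in># p. 0 < x)"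

definition perimeter :: "nat multiset \<Rightarrow> nat" where
  "perimeter p = Max (set_mset p) + size p - 1"

definition G_set :: "nat \<Rightarrow> nat multiset set" where
  "G_set M = {p. is_partition p \<and> p \<noteq> {#} \<and> (\<forall>x \<in># p. odd x) \<and> perimeter p = M}"

definition H_set :: "nat \<Rightarrow> nat multiset set" where
  "H_set M = {p. is_partition p \<and> p \<noteq> {#} \<and> (\<forall>x. count p x \<le> 1) \<and> perimeter p = M}"

definition g :: "nat \<Rightarrow> nat" where
  "g M = (\<Sum>p \<in> G_set M. size p)"

definition h :: "nat \<Rightarrow> nat" where
  "h M = (\<Sum>p \<in> H_set M. size p)"

definition G1_set :: "nat \<Rightarrow> nat multiset set" where
  "G1_set M = {p. is_partition p \<and> p \<noteq> {#} \<and> card {x \<in> set_mset p. even x} = 1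
                  \<and> perimeter p = M}"

end

theory Submission
  imports Defs
begin

text \<open>
  Sort the partitions by their largest part \<open>L\<close>. The perimeter then fixes the number of
  parts, \<open>M + 1 - L\<close>, and the remaining parts form an arbitrary multiset (for distinct parts,
  an arbitrary set) of admissible sizes below \<open>L\<close>. This gives
  \<open>g(M) = \<Sum>\<^sub>j (M - 2j) C(M-1-j, j)\<close>, \<open>h(M) = \<Sum>\<^sub>i (i + 1) C(M-1-i, i)\<close>, and
  \<open>\<Sum>\<^sub>b C(M-2-b, b) + \<Sum>\<^sub>t t C(M-2-t, t)\<close> for the partitions in \<open>G\<^sub>1(M)\<close> without ones
  (even largest part \<open>2b + 2\<close>, resp. odd largest part \<open>2t + 1\<close> and one of \<open>t\<close> possible
  even parts). In terms of \<open>D(n) = \<Sum>\<^sub>j C(n-j, j)\<close> and \<open>W(n) = \<Sum>\<^sub>j j C(n-j, j)\<close> the claim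
  becomes \<open>(M-1) D(M-1) - 3 W(M-1) = D(M-2) + W(M-2)\<close>, which follows by induction from
  \<open>D(n+2) = D(n+1) + D(n)\<close> and \<open>W(n+2) = W(n+1) + W(n) + D(n)\<close>.
\<close>

text \<open>\<open>diag_binom n\<close> is the Fibonacci number \<open>fib (Suc n)\<close> (see \<open>ne_diagonal_fib\<close>).\<close>

definition diag_binom :: "nat \<Rightarrow> nat" where
  "diag_binom n = (\<Sum>j\<le>n. (n - j) choose j)"

definition weighted_diag_binom :: "nat \<Rightarrow> nat" where
  "weighted_diag_binom n = (\<Sum>j\<le>n. j * ((n - j) choose j))"

lemma sum_diag_binom_atMost_extend:
  fixes f :: "nat \<Rightarrow> nat"
  assumes "n \<le> m"
  shows "(\<Sum>j\<le>m. f j * ((n - j) choose j)) = (\<Sum>j\<le>n. f j * ((n - j) choose j))"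
  using assms by (intro sum.mono_neutral_right) auto

lemma diag_binom_atMost: "n \<le> m \<Longrightarrow> diag_binom n = (\<Sum>j\<le>m. (n - j) choose j)"
  using sum_diag_binom_atMost_extend[of n m "\<lambda>_. 1"] by (simp add: diag_binom_def)

lemma weighted_diag_binom_atMost:
  "n \<le> m \<Longrightarrow> weighted_diag_binom n = (\<Sum>j\<le>m. j * ((n - j) choose j))"
  using sum_diag_binom_atMost_extend[of n m "\<lambda>j. j"] by (simp add: weighted_diag_binom_def)

lemma diag_binom_Suc_Suc: "diag_binom (Suc (Suc n)) = diag_binom (Suc n) + diag_binom n"
proof -
  have "diag_binom (Suc (Suc n)) = 1 + (\<Sum>j\<le>n. (Suc n - j) choose Suc j)"
    unfolding diag_binom_def by (subst sum.atMost_Suc_shift) simp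
  also have "\<dots> = 1 + (\<Sum>j\<le>n. (n - j) choose Suc j) + (\<Sum>j\<le>n. (n - j) choose j)"
    by (simp add: Suc_diff_le sum.distrib)
  also have "1 + (\<Sum>j\<le>n. (n - j) choose Suc j) = diag_binom (Suc n)"
    unfolding diag_binom_def by (subst sum.atMost_Suc_shift) simp
  finally show ?thesis by (simp add: diag_binom_def)
qed

lemma weighted_diag_binom_Suc_Suc:
  "weighted_diag_binom (Suc (Suc n)) =
     weighted_diag_binom (Suc n) + weighted_diag_binom n + diag_binom n"
proof -
  have "weighted_diag_binom (Suc (Suc n)) = (\<Sum>j\<le>n. Suc j * ((Suc n - j) choose Suc j))"
    unfolding weighted_diag_binom_def by (subst sum.atMost_Suc_shift) simp
  also have "\<dots> = (\<Sum>j\<le>n. Suc j * ((n - j) choose Suc j)) + (\<Sum>j\<le>n. Suc j * ((n - j) choose j))"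
    by (simp add: Suc_diff_le sum.distrib algebra_simps)
  also have "(\<Sum>j\<le>n. Suc j * ((n - j) choose Suc j)) = weighted_diag_binom (Suc n)"
    unfolding weighted_diag_binom_def by (subst sum.atMost_Suc_shift) simp
  also have "(\<Sum>j\<le>n. Suc j * ((n - j) choose j)) = weighted_diag_binom n + diag_binom n"
    by (simp add: weighted_diag_binom_def diag_binom_def sum.distrib)
  finally show ?thesis by simp
qed

lemma diag_binom_identity:
  "Suc n * diag_binom (Suc n) = 3 * weighted_diag_binom (Suc n) + diag_binom n + weighted_diag_binom n"
proof (induction n rule: induct_nat_012)
  case 0
  show ?case by (simp add: diag_binom_def weighted_diag_binom_def)
next
  case 1
  show ?case by (simp add: diag_binom_def weighted_diag_binom_def numeral_2_eq_2)
next
  case (ge2 n)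
  then show ?case
    using diag_binom_Suc_Suc[of "Suc n"] diag_binom_Suc_Suc[of n]
      weighted_diag_binom_Suc_Suc[of "Suc n"] weighted_diag_binom_Suc_Suc[of n]
    by (simp add: algebra_simps)
qed

lemma sum_group_injective_key:
  assumes "finite S" "finite T" "inj \<phi>" "k ` S \<subseteq> \<phi> ` T"
  shows "(\<Sum>x\<in>S. f x) = (\<Sum>j\<in>T. \<Sum>x\<in>{x\<in>S. k x = \<phi> j}. f x)"
proof -
  have "(\<Sum>x\<in>S. f x) = (\<Sum>y\<in>\<phi> ` T. \<Sum>x\<in>{x\<in>S. k x = y}. f x)"
    using sum.group[OF assms(1) finite_imageI[OF assms(2)] assms(4), of f] by simp
  also have "\<dots> = (\<Sum>j\<in>T. \<Sum>x\<in>{x\<in>S. k x = \<phi> j}. f x)"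
    using assms(3) by (simp add: sum.reindex inj_on_subset[of \<phi> UNIV])
  finally show ?thesis .
qed

lemma card_group_injective_key:
  assumes "finite S" "finite T" "inj \<phi>" "k ` S \<subseteq> \<phi> ` T"
  shows "card S = (\<Sum>j\<in>T. card {x\<in>S. k x = \<phi> j})"
  using sum_group_injective_key[OF assms, of "\<lambda>_. 1"] by (simp only: card_eq_sum)

lemma card_multisets_containing:
  assumes "finite A" "set_mset r \<subseteq> A" "card A = Suc c"
  shows "card {p. set_mset p \<subseteq> A \<and> r \<subseteq># p \<and> size p = n} =
           (if size r \<le> n then (c + (n - size r)) choose c else 0)"
proof (cases "size r \<le> n")
  case True
  have "{p. set_mset p \<subseteq> A \<and> r \<subseteq># p \<and> size p = n} =
        (\<lambda>q. q + r) ` multisets_of_size A (n - size r)"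
  proof (intro set_eqI iffI)
    fix p assume "p \<in> {p. set_mset p \<subseteq> A \<and> r \<subseteq># p \<and> size p = n}"
    then have p: "set_mset p \<subseteq> A" "r \<subseteq># p" "size p = n" by auto
    then have "p = (p - r) + r" "set_mset (p - r) \<subseteq> A" "size (p - r) = n - size r"
      by (auto simp: size_Diff_submset dest: in_diffD)
    then show "p \<in> (\<lambda>q. q + r) ` multisets_of_size A (n - size r)"
      unfolding multisets_of_size_def by (intro image_eqI[of _ _ "p - r"]) auto
  qed (use assms(2) True in \<open>auto simp: multisets_of_size_def\<close>)
  moreover have "inj_on (\<lambda>q. q + r) X" for X by (simp add: inj_on_def)
  ultimately have "card {p. set_mset p \<subseteq> A \<and> r \<subseteq># p \<and> size p = n} =
                   (c + (n - size r)) choose (n - size r)"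
    using assms by (simp add: card_image card_multisets_of_size)
  also have "\<dots> = (c + (n - size r)) choose c"
    using binomial_symmetric[of c "c + (n - size r)"] by simp
  finally show ?thesis using True by simp
next
  case False
  then have "{p. set_mset p \<subseteq> A \<and> r \<subseteq># p \<and> size p = n} = {}"
    by (auto dest: size_mset_mono)
  then show ?thesis using False by (metis card.empty)
qed

lemma perimeter_partition_Max:
  assumes "is_partition p" "p \<noteq> {#}" "perimeter p = M"
  shows "Max (set_mset p) \<in># p" "0 < Max (set_mset p)" "Max (set_mset p) \<le> M"
    "size p = M + 1 - Max (set_mset p)"
proof -
  show max: "Max (set_mset p) \<in># p" using assms(2) by simp
  then show "0 < Max (set_mset p)" using assms(1) by (simp add: is_partition_def)
  have "0 < size p" using assms(2) by (simp add: nonempty_has_size)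
  then show "Max (set_mset p) \<le> M" "size p = M + 1 - Max (set_mset p)"
    using assms(3) by (auto simp: perimeter_def)
qed

lemma finite_perimeter_partitions: "finite {p. is_partition p \<and> p \<noteq> {#} \<and> perimeter p = M}"
proof (rule finite_subset)
  show "{p. is_partition p \<and> p \<noteq> {#} \<and> perimeter p = M} \<subseteq> (\<Union>n\<le>M. multisets_of_size {..M} n)"
  proof
    fix p assume "p \<in> {p. is_partition p \<and> p \<noteq> {#} \<and> perimeter p = M}"
    then have "is_partition p" "p \<noteq> {#}" "perimeter p = M" by auto
    note facts = perimeter_partition_Max[OF this]
    have "set_mset p \<subseteq> {..M}" using facts(3) by (auto intro: order_trans[OF Max_ge])
    moreover have "size p \<le> M" using facts(2,4) by simp
    ultimately show "p \<in> (\<Union>n\<le>M. multisets_of_size {..M} n)" by (auto simp: multisets_of_size_def)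
  qed
qed auto

lemma perimeter_eq_iff_size:
  assumes "L \<in># p" "\<forall>x\<in>#p. 0 < x \<and> x \<le> L"
  shows "is_partition p \<and> p \<noteq> {#} \<and> perimeter p = M \<longleftrightarrow> size p = M + 1 - L"
proof -
  have "Max (set_mset p) = L" using assms by (intro Max_eqI) auto
  moreover have "0 < size p" using assms(1) by (intro gr0I) auto
  ultimately show ?thesis using assms by (auto simp: is_partition_def perimeter_def)
qed

lemma card_perimeter_partitions_containing:
  assumes "finite A" "\<forall>x\<in>A. 0 < x \<and> x \<le> L" "set_mset r \<subseteq> A" "L \<in># r" "card A = Suc c"
  shows "card {p. is_partition p \<and> p \<noteq> {#} \<and> perimeter p = M \<and> set_mset p \<subseteq> A \<and> r \<subseteq># p} =
           (if L + size r \<le> M + 1 then (c + (M + 1 - L - size r)) choose c else 0)"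
proof -
  have iff: "is_partition p \<and> p \<noteq> {#} \<and> perimeter p = M \<longleftrightarrow> size p = M + 1 - L"
    if "set_mset p \<subseteq> A" "r \<subseteq># p" for p
    using that assms(2,4) by (intro perimeter_eq_iff_size) (auto dest: mset_subset_eqD)
  have "{p. is_partition p \<and> p \<noteq> {#} \<and> perimeter p = M \<and> set_mset p \<subseteq> A \<and> r \<subseteq># p} =
        {p. set_mset p \<subseteq> A \<and> r \<subseteq># p \<and> size p = M + 1 - L}"
    by (intro Collect_cong) (use iff in auto)
  moreover have "1 \<le> size r" using assms(4) by (cases r) auto
  ultimately show ?thesis
    using card_multisets_containing[OF assms(1,3,5)] by (auto simp: diff_diff_add)
qed

lemma card_odd_atMost: "card {x::nat. odd x \<and> x \<le> 2 * j + 1} = Suc j"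
proof -
  have "{x::nat. odd x \<and> x \<le> 2 * j + 1} = (\<lambda>i. 2 * i + 1) ` {..j}"
    by (auto elim!: oddE)
  then show ?thesis by (simp add: card_image inj_on_def)
qed

lemma card_odd_gt_one_atMost: "card {x::nat. odd x \<and> 1 < x \<and> x \<le> 2 * t + 1} = t"
proof -
  have "{x::nat. odd x \<and> 1 < x \<and> x \<le> 2 * t + 1} = {x. odd x \<and> x \<le> 2 * t + 1} - {1}"
    by auto (metis Suc_lessI odd_pos)
  then show ?thesis using card_odd_atMost[of t] by simp
qed

lemma card_even_pos_atMost: "card {x::nat. even x \<and> 0 < x \<and> x \<le> 2 * t} = t"
proof -
  have "{x::nat. even x \<and> 0 < x \<and> x \<le> 2 * t} = (\<lambda>i. 2 * i) ` {1..t}"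
    by (auto elim!: evenE)
  then show ?thesis by (simp add: card_image inj_on_def)
qed

lemma G_set_largest_part_eq:
  "{p \<in> G_set M. Max (set_mset p) = 2 * j + 1} =
   {p. is_partition p \<and> p \<noteq> {#} \<and> perimeter p = M \<and>
       set_mset p \<subseteq> {x. odd x \<and> x \<le> 2 * j + 1} \<and> {#2 * j + 1#} \<subseteq># p}"
proof (intro Collect_cong iffI)
  fix p assume p: "p \<in> G_set M \<and> Max (set_mset p) = 2 * j + 1"
  then have "\<forall>x\<in>#p. x \<le> 2 * j + 1" using Max_ge[of "set_mset p"] by auto
  with p show "is_partition p \<and> p \<noteq> {#} \<and> perimeter p = M \<and>
       set_mset p \<subseteq> {x. odd x \<and> x \<le> 2 * j + 1} \<and> {#2 * j + 1#} \<subseteq># p"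
    by (auto simp: G_set_def dest: perimeter_partition_Max(1))
next
  fix p assume p: "is_partition p \<and> p \<noteq> {#} \<and> perimeter p = M \<and>
       set_mset p \<subseteq> {x. odd x \<and> x \<le> 2 * j + 1} \<and> {#2 * j + 1#} \<subseteq># p"
  then have "Max (set_mset p) = 2 * j + 1" by (intro Max_eqI) auto
  with p show "p \<in> G_set M \<and> Max (set_mset p) = 2 * j + 1" by (auto simp: G_set_def)
qed

lemma card_G_set_largest_part:
  assumes "1 \<le> M"
  shows "card {p \<in> G_set M. Max (set_mset p) = 2 * j + 1} = (M - 1 - j) choose j"
  unfolding G_set_largest_part_eq using assms card_odd_atMost[of j]
  by (subst card_perimeter_partitions_containing[of _ "2 * j + 1" _ j]) (auto simp: odd_pos)

lemma g_sum:
  assumes "1 \<le> M"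
  shows "g M = (\<Sum>j\<le>M. (M - 2 * j) * ((M - 1 - j) choose j))"
proof -
  have fin: "finite (G_set M)"
    by (rule finite_subset[OF _ finite_perimeter_partitions[of M]]) (auto simp: G_set_def)
  have "Max (set_mset p) \<in> (\<lambda>j. 2 * j + 1) ` {..M}" if "p \<in> G_set M" for p
  proof -
    have p: "is_partition p" "p \<noteq> {#}" "perimeter p = M" "\<forall>x\<in>#p. odd x"
      using that by (auto simp: G_set_def)
    then have "odd (Max (set_mset p))" "Max (set_mset p) \<le> M"
      using perimeter_partition_Max[OF p(1-3)] by auto
    then show ?thesis by (auto elim!: oddE)
  qed
  then have "g M = (\<Sum>j\<le>M. \<Sum>p\<in>{p \<in> G_set M. Max (set_mset p) = 2 * j + 1}. size p)"
    unfolding g_def using fin by (intro sum_group_injective_key) (auto simp: inj_def)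
  also have "\<dots> = (\<Sum>j\<le>M. (M - 2 * j) * card {p \<in> G_set M. Max (set_mset p) = 2 * j + 1})"
  proof (intro sum.cong refl)
    fix j
    have "size p = M - 2 * j" if "p \<in> {p \<in> G_set M. Max (set_mset p) = 2 * j + 1}" for p
      using that perimeter_partition_Max(4)[of p M] by (auto simp: G_set_def)
    then show "(\<Sum>p\<in>{p \<in> G_set M. Max (set_mset p) = 2 * j + 1}. size p) =
               (M - 2 * j) * card {p \<in> G_set M. Max (set_mset p) = 2 * j + 1}"
      by simp
  qed
  also have "\<dots> = (\<Sum>j\<le>M. (M - 2 * j) * ((M - 1 - j) choose j))"
    by (simp only: card_G_set_largest_part[OF assms])
  finally show ?thesis .
qed

lemma g_eq_diag_binom:
  assumes "1 \<le> M"
  shows "g M + 2 * weighted_diag_binom (M - 1) = M * diag_binom (M - 1)"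
proof -
  have "(M - 2 * j) * ((M - 1 - j) choose j) + 2 * j * ((M - 1 - j) choose j) =
        M * ((M - 1 - j) choose j)" for j
    by (cases "j \<le> M - 1 - j") (simp_all add: add_mult_distrib[symmetric])
  moreover have "2 * weighted_diag_binom (M - 1) = (\<Sum>j\<le>M. 2 * j * ((M - 1 - j) choose j))"
    by (subst weighted_diag_binom_atMost[of "M - 1" M]) (simp_all add: sum_distrib_left mult.assoc)
  moreover have "M * diag_binom (M - 1) = (\<Sum>j\<le>M. M * ((M - 1 - j) choose j))"
    by (subst diag_binom_atMost[of "M - 1" M]) (simp_all add: sum_distrib_left)
  ultimately show ?thesis using assms by (simp add: g_sum sum.distrib[symmetric])
qed

lemma mset_set_set_mset_eq:
  assumes "\<And>x. count p x \<le> 1"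
  shows "mset_set (set_mset p) = p"
proof (rule multiset_eqI)
  fix x
  show "count (mset_set (set_mset p)) x = count p x"
    using assms[of x] by (cases "count p x") (auto simp: count_mset_set' not_in_iff)
qed

lemma H_set_size_eq:
  assumes "i < M"
  shows "{p \<in> H_set M. size p = Suc i} =
         (\<lambda>S. mset_set (insert (M - i) S)) ` {S. S \<subseteq> {1..<M - i} \<and> card S = i}"
proof (intro set_eqI iffI)
  fix p assume "p \<in> {p \<in> H_set M. size p = Suc i}"
  then have p: "is_partition p" "p \<noteq> {#}" "perimeter p = M" "\<And>x. count p x \<le> 1"
    and size: "size p = Suc i" by (auto simp: H_set_def)
  note facts = perimeter_partition_Max[OF p(1-3)]
  have p_eq: "p = mset_set (set_mset p)" using mset_set_set_mset_eq[OF p(4)] by simp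
  have max: "Max (set_mset p) = M - i" using facts(4) size by simp
  define S where "S = set_mset p - {M - i}"
  have "set_mset p = insert (M - i) S" using facts(1) max by (auto simp: S_def)
  moreover have "S \<subseteq> {1..<M - i}"
  proof
    fix x assume "x \<in> S"
    then have x: "x \<in># p" "x \<noteq> M - i" by (auto simp: S_def)
    then have "0 < x" "x \<le> M - i"
      using p(1) max Max_ge[of "set_mset p" x] by (auto simp: is_partition_def)
    with x show "x \<in> {1..<M - i}" by simp
  qed
  moreover have "card S = i"
    using size facts(1) max p_eq by (metis S_def card_Diff_singleton diff_Suc_1 size_mset_set)
  ultimately show "p \<in> (\<lambda>S. mset_set (insert (M - i) S)) ` {S. S \<subseteq> {1..<M - i} \<and> card S = i}"
    using p_eq by auto
next
  fix p assume "p \<in> (\<lambda>S. mset_set (insert (M - i) S)) ` {S. S \<subseteq> {1..<M - i} \<and> card S = i}"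
  then obtain S where p: "p = mset_set (insert (M - i) S)" and S: "S \<subseteq> {1..<M - i}" "card S = i"
    by auto
  have fin: "finite S" using S(1) finite_subset by blast
  have set_p: "set_mset p = insert (M - i) S" using p fin by simp
  have "Max (set_mset p) = M - i" unfolding set_p using S(1) fin by (intro Max_eqI) auto
  moreover have "size p = Suc i" using p fin S by (auto simp: card_insert_if)
  ultimately show "p \<in> {p \<in> H_set M. size p = Suc i}"
    using set_p S(1) assms p fin
    by (auto simp: H_set_def is_partition_def perimeter_def count_mset_set' mset_set_empty_iff)
qed

lemma card_H_set_size:
  assumes "1 \<le> M"
  shows "card {p \<in> H_set M. size p = Suc i} = (M - 1 - i) choose i"
proof (cases "i < M")
  case True
  have "inj_on (\<lambda>S. mset_set (insert (M - i) S)) {S. S \<subseteq> {1..<M - i} \<and> card S = i}"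
  proof (rule inj_onI)
    fix S T
    assume S: "S \<in> {S. S \<subseteq> {1..<M - i} \<and> card S = i}"
      and T: "T \<in> {S. S \<subseteq> {1..<M - i} \<and> card S = i}"
      and eq: "mset_set (insert (M - i) S) = mset_set (insert (M - i) T)"
    have "finite S" "finite T" using S T finite_subset by auto
    then have "insert (M - i) S = insert (M - i) T"
      using eq by (metis finite_insert finite_set_mset_mset_set)
    moreover have "M - i \<notin> S" "M - i \<notin> T" using S T by auto
    ultimately show "S = T" by (metis insert_ident)
  qed
  then have "card {p \<in> H_set M. size p = Suc i} = card {1..<M - i} choose i"
    unfolding H_set_size_eq[OF True] by (simp add: card_image n_subsets)
  then show ?thesis by simp
next
  case False
  have "{p \<in> H_set M. size p = Suc i} = {}"
    using False perimeter_partition_Max(2,4) by (fastforce simp: H_set_def)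
  then have "card {p \<in> H_set M. size p = Suc i} = 0" by (metis card.empty)
  then show ?thesis using False assms by simp
qed

lemma h_eq_diag_binom:
  assumes "1 \<le> M"
  shows "h M = weighted_diag_binom (M - 1) + diag_binom (M - 1)"
proof -
  have fin: "finite (H_set M)"
    by (rule finite_subset[OF _ finite_perimeter_partitions[of M]]) (auto simp: H_set_def)
  have "size p \<in> Suc ` {..M}" if "p \<in> H_set M" for p
  proof -
    have "is_partition p" "p \<noteq> {#}" "perimeter p = M" using that by (auto simp: H_set_def)
    then have "0 < size p" "size p \<le> M"
      using perimeter_partition_Max(2,4)[of p M] by (metis nonempty_has_size, auto)
    then show ?thesis by (intro image_eqI[of _ _ "size p - 1"]) auto
  qed
  then have "h M = (\<Sum>i\<le>M. \<Sum>p\<in>{p \<in> H_set M. size p = Suc i}. size p)"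
    unfolding h_def using fin by (intro sum_group_injective_key) auto
  also have "\<dots> = (\<Sum>i\<le>M. \<Sum>p\<in>{p \<in> H_set M. size p = Suc i}. Suc i)"
    by (intro sum.cong refl) simp
  also have "\<dots> = (\<Sum>i\<le>M. Suc i * ((M - 1 - i) choose i))"
    by (simp add: card_H_set_size[OF assms] mult.commute)
  also have "\<dots> = (\<Sum>i\<le>M. i * ((M - 1 - i) choose i)) + (\<Sum>i\<le>M. (M - 1 - i) choose i)"
    by (simp add: sum.distrib)
  also have "\<dots> = weighted_diag_binom (M - 1) + diag_binom (M - 1)"
    by (simp only: weighted_diag_binom_atMost[of "M - 1" M] diag_binom_atMost[of "M - 1" M]
        diff_le_self)
  finally show ?thesis .
qed

lemma card_by_largest_part_parity:
  fixes S :: "nat multiset set"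
  assumes "finite S" "\<And>p. p \<in> S \<Longrightarrow> 0 < Max (set_mset p) \<and> Max (set_mset p) \<le> M"
  shows "card S = (\<Sum>b\<le>M. card {p \<in> S. Max (set_mset p) = 2 * b + 2}) +
                  (\<Sum>t\<le>M. card {p \<in> S. Max (set_mset p) = 2 * t + 1})"
proof -
  let ?E = "{p \<in> S. even (Max (set_mset p))}" and ?O = "{p \<in> S. odd (Max (set_mset p))}"
  have "Max (set_mset p) \<in> (\<lambda>b. 2 * b + 2) ` {..M}" if "p \<in> ?E" for p
    using that assms(2)[of p] by (intro image_eqI[of _ _ "Max (set_mset p) div 2 - 1"]) auto
  then have "card ?E = (\<Sum>b\<le>M. card {p \<in> ?E. Max (set_mset p) = 2 * b + 2})"
    using assms(1) by (intro card_group_injective_key) (auto simp: inj_def)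
  also have "\<dots> = (\<Sum>b\<le>M. card {p \<in> S. Max (set_mset p) = 2 * b + 2})"
    by (intro sum.cong refl, rule arg_cong[where f = card]) auto
  finally have even: "card ?E = (\<Sum>b\<le>M. card {p \<in> S. Max (set_mset p) = 2 * b + 2})" .
  have "Max (set_mset p) \<in> (\<lambda>t. 2 * t + 1) ` {..M}" if "p \<in> ?O" for p
    using that assms(2)[of p] by (intro image_eqI[of _ _ "Max (set_mset p) div 2"]) auto
  then have "card ?O = (\<Sum>t\<le>M. card {p \<in> ?O. Max (set_mset p) = 2 * t + 1})"
    using assms(1) by (intro card_group_injective_key) (auto simp: inj_def)
  also have "\<dots> = (\<Sum>t\<le>M. card {p \<in> S. Max (set_mset p) = 2 * t + 1})"
    by (intro sum.cong refl, rule arg_cong[where f = card]) auto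
  finally have odd: "card ?O = (\<Sum>t\<le>M. card {p \<in> S. Max (set_mset p) = 2 * t + 1})" .
  have "S = ?E \<union> ?O" by auto
  then have "card S = card ?E + card ?O"
    using assms(1) by (metis (no_types, lifting) card_Un_disjoint disjoint_iff finite_Un mem_Collect_eq)
  with even odd show ?thesis by simp
qed

lemma G1_set_even_part_unique:
  assumes "p \<in> G1_set M" "e \<in># p" "even e" "x \<in># p" "even x"
  shows "x = e"
proof -
  have "card {x \<in> set_mset p. even x} = 1" using assms(1) by (simp add: G1_set_def)
  then obtain a where "{x \<in> set_mset p. even x} = {a}" by (rule card_1_singletonE)
  moreover have "e \<in> {x \<in> set_mset p. even x}" "x \<in> {x \<in> set_mset p. even x}"
    using assms(2-5) by simp_all
  ultimately show ?thesis by simp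
qed

lemma G1_set_even_largest_part_eq:
  "{p \<in> G1_set M. 1 \<notin># p \<and> Max (set_mset p) = 2 * b + 2} =
   {p. is_partition p \<and> p \<noteq> {#} \<and> perimeter p = M \<and>
       set_mset p \<subseteq> insert (2 * b + 2) {x. odd x \<and> 1 < x \<and> x \<le> 2 * b + 1} \<and>
       {#2 * b + 2#} \<subseteq># p}"
proof (intro Collect_cong iffI)
  fix p assume p: "p \<in> G1_set M \<and> 1 \<notin># p \<and> Max (set_mset p) = 2 * b + 2"
  then have max: "2 * b + 2 \<in># p"
    using perimeter_partition_Max(1)[of p M] by (auto simp: G1_set_def)
  have "x \<in> insert (2 * b + 2) {x. odd x \<and> 1 < x \<and> x \<le> 2 * b + 1}" if "x \<in># p" for x
  proof (cases "even x")
    case True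
    then show ?thesis using G1_set_even_part_unique[of p M "2 * b + 2" x] p max that by simp
  next
    case False
    moreover have "x \<le> 2 * b + 2" using p that Max_ge[of "set_mset p" x] by auto
    moreover have "x \<noteq> 1" using p that by auto
    ultimately show ?thesis using odd_pos[of x] by (cases "x = 2 * b + 2") auto
  qed
  with p max show "is_partition p \<and> p \<noteq> {#} \<and> perimeter p = M \<and>
       set_mset p \<subseteq> insert (2 * b + 2) {x. odd x \<and> 1 < x \<and> x \<le> 2 * b + 1} \<and>
       {#2 * b + 2#} \<subseteq># p"
    by (auto simp: G1_set_def)
next
  fix p assume p: "is_partition p \<and> p \<noteq> {#} \<and> perimeter p = M \<and>
       set_mset p \<subseteq> insert (2 * b + 2) {x. odd x \<and> 1 < x \<and> x \<le> 2 * b + 1} \<and>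
       {#2 * b + 2#} \<subseteq># p"
  then have "Max (set_mset p) = 2 * b + 2" by (intro Max_eqI) auto
  moreover have "{x \<in> set_mset p. even x} = {2 * b + 2}" using p by auto
  ultimately show "p \<in> G1_set M \<and> 1 \<notin># p \<and> Max (set_mset p) = 2 * b + 2"
    using p by (auto simp: G1_set_def)
qed

lemma card_G1_set_even_largest_part:
  assumes "2 \<le> M"
  shows "card {p \<in> G1_set M. 1 \<notin># p \<and> Max (set_mset p) = 2 * b + 2} = (M - 2 - b) choose b"
proof -
  have "card (insert (2 * b + 2) {x. odd x \<and> 1 < x \<and> x \<le> 2 * b + 1}) = Suc b"
    using card_odd_gt_one_atMost[of b] by (subst card_insert_disjoint) auto
  then show ?thesis
    unfolding G1_set_even_largest_part_eq using assms
    by (subst card_perimeter_partitions_containing[of _ "2 * b + 2" _ b]) auto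
qed

lemma G1_set_odd_largest_part_eq:
  assumes "even e" "e \<le> 2 * t"
  shows "{p \<in> G1_set M. 1 \<notin># p \<and> Max (set_mset p) = 2 * t + 1 \<and> e \<in># p} =
   {p. is_partition p \<and> p \<noteq> {#} \<and> perimeter p = M \<and>
       set_mset p \<subseteq> insert e {x. odd x \<and> 1 < x \<and> x \<le> 2 * t + 1} \<and>
       {#e, 2 * t + 1#} \<subseteq># p}"
proof (intro Collect_cong iffI)
  fix p assume p: "p \<in> G1_set M \<and> 1 \<notin># p \<and> Max (set_mset p) = 2 * t + 1 \<and> e \<in># p"
  then have max: "2 * t + 1 \<in># p"
    using perimeter_partition_Max(1)[of p M] by (auto simp: G1_set_def)
  have "x \<in> insert e {x. odd x \<and> 1 < x \<and> x \<le> 2 * t + 1}" if "x \<in># p" for x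
  proof (cases "even x")
    case True
    then show ?thesis using G1_set_even_part_unique[of p M e x] p assms that by simp
  next
    case False
    moreover have "x \<le> 2 * t + 1" using p that Max_ge[of "set_mset p" x] by auto
    moreover have "x \<noteq> 1" using p that by auto
    ultimately show ?thesis using odd_pos[of x] by simp
  qed
  moreover have "{#e, 2 * t + 1#} \<subseteq># p"
    using p max assms by (auto simp: insert_subset_eq_iff in_diff_count)
  ultimately show "is_partition p \<and> p \<noteq> {#} \<and> perimeter p = M \<and>
       set_mset p \<subseteq> insert e {x. odd x \<and> 1 < x \<and> x \<le> 2 * t + 1} \<and>
       {#e, 2 * t + 1#} \<subseteq># p"
    using p by (auto simp: G1_set_def)
next
  fix p assume p: "is_partition p \<and> p \<noteq> {#} \<and> perimeter p = M \<and>
       set_mset p \<subseteq> insert e {x. odd x \<and> 1 < x \<and> x \<le> 2 * t + 1} \<and>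
       {#e, 2 * t + 1#} \<subseteq># p"
  then have "e \<in># p" "2 * t + 1 \<in># p" by (auto dest: mset_subset_eqD)
  then have "Max (set_mset p) = 2 * t + 1" using p assms by (intro Max_eqI) auto
  moreover have "{x \<in> set_mset p. even x} = {e}" using p assms \<open>e \<in># p\<close> by auto
  moreover have "1 \<notin># p" using p assms by auto
  ultimately show "p \<in> G1_set M \<and> 1 \<notin># p \<and> Max (set_mset p) = 2 * t + 1 \<and> e \<in># p"
    using p \<open>e \<in># p\<close> by (auto simp: G1_set_def)
qed

lemma card_G1_set_odd_largest_part:
  "card {p \<in> G1_set M. 1 \<notin># p \<and> Max (set_mset p) = 2 * t + 1} = t * ((M - 2 - t) choose t)"
proof -
  define E where "E = {x::nat. even x \<and> 0 < x \<and> x \<le> 2 * t}"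
  define F where
    "F e = {p \<in> G1_set M. 1 \<notin># p \<and> Max (set_mset p) = 2 * t + 1 \<and> e \<in># p}" for e
  have "{p \<in> G1_set M. 1 \<notin># p \<and> Max (set_mset p) = 2 * t + 1} = (\<Union>e\<in>E. F e)"
  proof (intro equalityI subsetI)
    fix p assume p: "p \<in> {p \<in> G1_set M. 1 \<notin># p \<and> Max (set_mset p) = 2 * t + 1}"
    then have "card {x \<in> set_mset p. even x} = 1" by (simp add: G1_set_def)
    then obtain e where "{x \<in> set_mset p. even x} = {e}" by (rule card_1_singletonE)
    then have e: "e \<in># p" "even e" by auto
    then have "0 < e" "e \<le> 2 * t + 1"
      using p Max_ge[of "set_mset p" e] by (auto simp: G1_set_def is_partition_def)
    then have "e \<in> E" using e by (cases "e = 2 * t + 1") (auto simp: E_def)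
    with e p show "p \<in> (\<Union>e\<in>E. F e)" by (auto simp: F_def)
  qed (auto simp: F_def)
  moreover have "finite (F e)" for e
    by (rule finite_subset[OF _ finite_perimeter_partitions[of M]]) (auto simp: F_def G1_set_def)
  moreover have "F e \<inter> F e' = {}" if "e \<in> E" "e' \<in> E" "e \<noteq> e'" for e e'
    using that G1_set_even_part_unique[of _ M e e'] by (auto simp: E_def F_def)
  moreover have "card (F e) = (if 2 * t + 2 \<le> M then (M - 2 - t) choose t else 0)"
    if "e \<in> E" for e
  proof -
    have card_parts: "card (insert e {x. odd x \<and> 1 < x \<and> x \<le> 2 * t + 1}) = Suc t"
      using that card_odd_gt_one_atMost[of t] by (subst card_insert_disjoint) (auto simp: E_def)
    have F_eq: "F e = {p. is_partition p \<and> p \<noteq> {#} \<and> perimeter p = M \<and>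
       set_mset p \<subseteq> insert e {x. odd x \<and> 1 < x \<and> x \<le> 2 * t + 1} \<and> {#e, 2 * t + 1#} \<subseteq># p}"
      using that unfolding F_def E_def by (intro G1_set_odd_largest_part_eq) auto
    show ?thesis
      unfolding F_eq using card_parts that
      by (subst card_perimeter_partitions_containing[of _ "2 * t + 1" _ t]) (auto simp: E_def)
  qed
  ultimately have "card {p \<in> G1_set M. 1 \<notin># p \<and> Max (set_mset p) = 2 * t + 1} =
                   t * (if 2 * t + 2 \<le> M then (M - 2 - t) choose t else 0)"
    using card_even_pos_atMost[of t] by (simp add: card_UN_disjoint E_def)
  then show ?thesis by (cases "2 * t + 2 \<le> M") auto
qed

lemma card_G1_set_without_ones:
  assumes "2 \<le> M"
  shows "card {p \<in> G1_set M. 1 \<notin># p} = diag_binom (M - 2) + weighted_diag_binom (M - 2)"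
proof -
  define S where "S = {p \<in> G1_set M. 1 \<notin># p}"
  have fibre: "{p \<in> S. Max (set_mset p) = k} = {p \<in> G1_set M. 1 \<notin># p \<and> Max (set_mset p) = k}"
    for k by (auto simp: S_def)
  have "finite S"
    by (rule finite_subset[OF _ finite_perimeter_partitions[of M]]) (auto simp: S_def G1_set_def)
  moreover have "0 < Max (set_mset p) \<and> Max (set_mset p) \<le> M" if "p \<in> S" for p
    using that perimeter_partition_Max(2,3)[of p M] by (auto simp: S_def G1_set_def)
  ultimately have "card S = (\<Sum>b\<le>M. card {p \<in> S. Max (set_mset p) = 2 * b + 2}) +
                            (\<Sum>t\<le>M. card {p \<in> S. Max (set_mset p) = 2 * t + 1})"
    by (rule card_by_largest_part_parity)
  also have "\<dots> = (\<Sum>b\<le>M. (M - 2 - b) choose b) + (\<Sum>t\<le>M. t * ((M - 2 - t) choose t))"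
    by (simp only: fibre card_G1_set_even_largest_part[OF assms] card_G1_set_odd_largest_part)
  finally show ?thesis
    by (simp add: S_def diag_binom_atMost[of "M - 2" M] weighted_diag_binom_atMost[of "M - 2" M])
qed

lemma G1_set_one_without_ones: "{p \<in> G1_set 1. 1 \<notin># p} = {}"
proof -
  have "1 \<in># p" if "p \<in> G1_set 1" for p
  proof -
    have "is_partition p" "p \<noteq> {#}" "perimeter p = 1" using that by (auto simp: G1_set_def)
    note facts = perimeter_partition_Max(1-3)[OF this]
    then have "Max (set_mset p) = 1" by linarith
    with facts(1) show ?thesis by simp
  qed
  then show ?thesis by auto
qed

theorem mainTheorem7:
  fixes M :: nat
  assumes "M \<ge> 1"
  shows "int (g M) - int (h M) = int (card {p \<in> G1_set M. 1 \<notin># p})"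
proof (cases "M = 1")
  case True
  then show ?thesis
    using g_eq_diag_binom[of 1] h_eq_diag_binom[of 1]
    unfolding True G1_set_one_without_ones by (simp add: diag_binom_def weighted_diag_binom_def)
next
  case False
  define n where "n = M - 2"
  have M: "M = n + 2" using assms False by (simp add: n_def)
  have "g M + 2 * weighted_diag_binom (Suc n) = (n + 2) * diag_binom (Suc n)"
    using g_eq_diag_binom[of M] M by simp
  moreover have "h M = weighted_diag_binom (Suc n) + diag_binom (Suc n)"
    using h_eq_diag_binom[of M] M by simp
  moreover have "card {p \<in> G1_set M. 1 \<notin># p} = diag_binom n + weighted_diag_binom n"
    using card_G1_set_without_ones[of M] M by simp
  ultimately show ?thesis
    using diag_binom_identity[of n] by (simp add: algebra_simps)
qed

end
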